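(* Let $\mathbf A\in\mathbb R^{m\times n}$, $0\le\epsilon<1$, let $0\le s<\mathrm{rank}(\mathbf A)$ be an integer, $t_s=s+\mathrm{sr}_s(\mathbf A)$, and let $k$ be an integer with $s<k<t_s$. Define $\gamma_s(k)=\sqrt{1+\frac{2(k-s)}{t_s-k}}$ and $\Phi_s(k)=\big(1+\frac{s}{k-s}\big)\gamma_s(k)$. Let $\alpha=\frac{\gamma_s(k)\,\mathrm{OPT}_k}{(1-\epsilon)(k-s)}$ and $S\sim\mathrm{DPP}(\frac1\alpha\mathbf A^\top\mathbf A)$. Then \[ \frac{\mathbb E[\mathrm{Er}_{\mathbf A}(S)]}{\mathrm{OPT}_k}\le\frac{\Phi_s(k)}{1-\epsilon}\qquad\text{and}\qquad\mathbb E[|S|]\le k-\epsilon\,\frac{k-s}{\gamma_s(k)}. \]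
   Context: For $\mathbf A\in\mathbb R^{m\times n}$ with columns $\mathbf a_1,\dots,\mathbf a_n$ and $S\subseteq\{1,\dots,n\}$, $\mathbf P_S$ is the orthogonal projection onto $\mathrm{span}\{\mathbf a_i:i\in S\}$, $\mathrm{Er}_{\mathbf A}(S)=\|\mathbf A-\mathbf P_S\mathbf A\|_F^2$, and $\mathrm{OPT}_k=\min_{\mathrm{rank}(\mathbf B)=k}\|\mathbf A-\mathbf B\|_F^2=\sum_{i>k}\lambda_i$ where $\lambda_1\ge\lambda_2\ge\dots$ are the eigenvalues of $\mathbf A^\top\mathbf A$. Stable rank: $\mathrm{sr}_s(\mathbf A)=\lambda_{s+1}^{-1}\sum_{i>s}\lambda_i$. For a p.s.d. $n\times n$ matrix $\mathbf K$, $S\sim\mathrm{DPP}(\mathbf K)$ is the distribution over all subsets $S\subseteq\{1,\dots,n\}$ (of any size) with $\Pr(S)=\det(\mathbf K_{S,S})/\det(\mathbf I+\mathbf K)$, $\mathbf K_{S,S}$ the principal submatrix indexed by $S$ (empty determinant $=1$). *)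

theory Defs
  imports "HOL-Analysis.Analysis"
begin

text \<open>The paper's lambda_i (1-based) is sorted_eigs M (i - 1).\<close>
definition sorted_eigs :: "real^'n^'n \<Rightarrow> nat \<Rightarrow> real" where
  "sorted_eigs M = (SOME lam.
      (\<exists>v :: nat \<Rightarrow> real^'n.
          (\<forall>i < CARD('n). M *v v i = lam i *\<^sub>R v i) \<and>
          (\<forall>i < CARD('n). \<forall>j < CARD('n). v i \<bullet> v j = (if i = j then 1 else 0))) \<and>
      (\<forall>i j. i \<le> j \<longrightarrow> j < CARD('n) \<longrightarrow> lam j \<le> lam i) \<and>
      (\<forall>i \<ge> CARD('n). lam i = 0))"

definition eigsAtA :: "real^'n^'m \<Rightarrow> nat \<Rightarrow> real" where
  "eigsAtA A = sorted_eigs (transpose A ** A)"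

text \<open>OPT_k = sum_{i>k} lambda_i (1-based), i.e. 0-based indices k .. n-1.\<close>
definition OPT :: "real^'n^'m \<Rightarrow> nat \<Rightarrow> real" where
  "OPT A k = (\<Sum>i\<in>{k..<CARD('n)}. eigsAtA A i)"

definition stable_rank :: "real^'n^'m \<Rightarrow> nat \<Rightarrow> real" where
  "stable_rank A s = OPT A s / eigsAtA A s"

definition proj_onto :: "'a::real_inner set \<Rightarrow> 'a \<Rightarrow> 'a" where
  "proj_onto V x = (SOME p. p \<in> V \<and> (\<forall>v\<in>V. (x - p) \<bullet> v = 0))"

definition frob2 :: "real^'n^'m \<Rightarrow> real" where
  "frob2 M = (\<Sum>i\<in>UNIV. \<Sum>j\<in>UNIV. (M $ i $ j)^2)"

definition projS :: "real^'n^'m \<Rightarrow> 'n set \<Rightarrow> real^'n^'m" where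
  "projS A S = (\<chi> i j. proj_onto (span ((\<lambda>l. column l A) ` S)) (column j A) $ i)"

definition Er :: "real^'n^'m \<Rightarrow> 'n set \<Rightarrow> real" where
  "Er A S = frob2 (A - projS A S)"

definition pminor :: "real^'n^'n \<Rightarrow> 'n set \<Rightarrow> real" where
  "pminor K S = (\<Sum>p\<in>{p. p permutes S}. of_int (sign p) * (\<Prod>i\<in>S. K $ i $ p i))"

definition dpp_prob :: "real^'n^'n \<Rightarrow> 'n set \<Rightarrow> real" where
  "dpp_prob K S = pminor K S / det (mat 1 + K)"

definition dpp_expect :: "real^'n^'n \<Rightarrow> ('n set \<Rightarrow> real) \<Rightarrow> real" where
  "dpp_expect K f = (\<Sum>S\<in>(UNIV :: 'n set set). dpp_prob K S * f S)"

end

theory Submission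
  imports Defs
begin

(*
  Let \<lambda>\<^sub>1 \<ge> \<lambda>\<^sub>2 \<ge> ... be the eigenvalues of A\<^sup>T A, let K = A\<^sup>T A / \<alpha>, and let K[T] be the
  principal submatrix on T. By the base-times-height formula for Gram determinants,
  det K[T] Er(T) = \<alpha> \<Sum>\<^sub>j\<^sub>\<notin>\<^sub>T det K[T + j]; summed over T this gives E Er(S) = \<alpha> E |S|.
  Expanding det (I + t K) once into principal minors and once into eigenvalues, and differentiating
  at t = 1, gives E |S| = \<Sum>\<^sub>i \<lambda>\<^sub>i / (\<lambda>\<^sub>i + \<alpha>). In this sum the first s terms are at most 1, the
  next k - s at most \<lambda>\<^sub>s\<^sub>+\<^sub>1 / (\<lambda>\<^sub>s\<^sub>+\<^sub>1 + \<alpha>) \<le> 1 - 1/\<gamma>, and the rest add up to at most OPT\<^sub>k / \<alpha>;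
  the choice of \<gamma> and \<alpha> makes the total k - \<epsilon>(k - s)/\<gamma> \<le> k, whence E Er(S) \<le> \<alpha> k.
*)

definition orthonormal_eigenvectors ::
    "real^'n^'n \<Rightarrow> nat \<Rightarrow> (nat \<Rightarrow> real) \<Rightarrow> (nat \<Rightarrow> real^'n) \<Rightarrow> bool" where
  "orthonormal_eigenvectors M d lam v \<longleftrightarrow>
     (\<forall>i<d. M *v v i = lam i *\<^sub>R v i) \<and> (\<forall>i<d. \<forall>j<d. v i \<bullet> v j = (if i = j then 1 else 0))"

lemma inner_matrix_vector_symmetric:
  fixes M :: "real^'n^'n"
  assumes "transpose M = M"
  shows "x \<bullet> (M *v y) = (M *v x) \<bullet> y"
  by (metis assms dot_lmul_matrix vector_transpose_matrix)

lemma linear_quadratic_nonpos_imp_zero: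
  fixes a b :: real
  assumes "\<And>t. a * t + b * t\<^sup>2 \<le> 0"
  shows "a = 0"
proof (rule ccontr)
  assume "a \<noteq> 0"
  define d where "d = \<bar>b\<bar> + 1"
  have "d > 0" "d + b > 0" unfolding d_def by auto
  have "a * (a / d) + b * (a / d)\<^sup>2 = a\<^sup>2 * (d + b) / d\<^sup>2"
    using \<open>d > 0\<close> by (simp add: field_simps power2_eq_square)
  also have "\<dots> > 0"
    using \<open>a \<noteq> 0\<close> \<open>d > 0\<close> \<open>d + b > 0\<close> by simp
  finally show False using assms[of "a / d"] by simp
qed

lemma maximiser_of_quadratic_form_is_eigenvector:
  fixes M :: "real^'n^'n"
  assumes sym: "transpose M = M" and V: "subspace V" and inv: "\<forall>y\<in>V. M *v y \<in> V"
    and x: "x \<in> V" and max: "\<forall>y\<in>V. y \<bullet> (M *v y) \<le> \<mu> * (y \<bullet> y)"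
    and attained: "x \<bullet> (M *v x) = \<mu> * (x \<bullet> x)"
  shows "M *v x = \<mu> *\<^sub>R x"
proof -
  define z where "z = M *v x - \<mu> *\<^sub>R x"
  have z: "z \<in> V" unfolding z_def using inv x V by (simp add: subspace_diff subspace_scale)
  have zMx: "z \<bullet> (M *v x) = z \<bullet> z + \<mu> * (x \<bullet> z)"
    unfolding z_def by (simp add: inner_diff_left inner_diff_right inner_commute algebra_simps)
  have xMz: "x \<bullet> (M *v z) = z \<bullet> (M *v x)"
    using inner_matrix_vector_symmetric[OF sym, of x z] by (simp add: inner_commute)
  have "(2 * (z \<bullet> z)) * t + (z \<bullet> (M *v z) - \<mu> * (z \<bullet> z)) * t\<^sup>2 \<le> 0" for t
  proof -
    have "x + t *\<^sub>R z \<in> V" using x z V by (simp add: subspace_add subspace_scale)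
    then have "(x + t *\<^sub>R z) \<bullet> (M *v (x + t *\<^sub>R z)) \<le> \<mu> * ((x + t *\<^sub>R z) \<bullet> (x + t *\<^sub>R z))"
      using max by blast
    then show ?thesis
      using attained zMx xMz
      by (simp add: matrix_vector_right_distrib matrix_vector_mult_scaleR inner_add_left
          inner_add_right inner_commute power2_eq_square algebra_simps)
  qed
  then have "2 * (z \<bullet> z) = 0" by (rule linear_quadratic_nonpos_imp_zero)
  then show ?thesis unfolding z_def by simp
qed

lemma symmetric_top_eigenvector:
  fixes M :: "real^'n^'n"
  assumes sym: "transpose M = M" and V: "subspace V" and inv: "\<forall>y\<in>V. M *v y \<in> V"
    and nontriv: "V \<noteq> {0}"
  obtains x \<mu> where "x \<in> V" "x \<bullet> x = 1" "M *v x = \<mu> *\<^sub>R x"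
    "\<forall>y\<in>V. y \<bullet> (M *v y) \<le> \<mu> * (y \<bullet> y)"
proof -
  let ?S = "V \<inter> sphere 0 1"
  obtain y where y: "y \<in> V" "y \<noteq> 0" using nontriv V subspace_0 by blast
  then have "(1 / norm y) *\<^sub>R y \<in> ?S" using V by (simp add: subspace_scale)
  moreover have "compact ?S"
    by (rule closed_Int_compact[OF closed_subspace[OF V] compact_sphere])
  moreover have "continuous_on ?S (\<lambda>x. x \<bullet> (M *v x))"
    by (intro continuous_intros linear_continuous_on)
      (simp add: matrix_vector_mul_linear linear_linear)
  ultimately obtain x where x: "x \<in> ?S" and xmax: "\<forall>y\<in>?S. y \<bullet> (M *v y) \<le> x \<bullet> (M *v x)"
    using continuous_attains_sup[of ?S] by blast
  define \<mu> where "\<mu> = x \<bullet> (M *v x)"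
  have xV: "x \<in> V" and xx: "x \<bullet> x = 1" using x by (auto simp: dot_square_norm)
  have max: "\<forall>y\<in>V. y \<bullet> (M *v y) \<le> \<mu> * (y \<bullet> y)"
  proof
    fix y assume "y \<in> V"
    show "y \<bullet> (M *v y) \<le> \<mu> * (y \<bullet> y)"
    proof (cases "y = 0")
      case False
      let ?u = "(1 / norm y) *\<^sub>R y"
      have "?u \<in> ?S" using False \<open>y \<in> V\<close> V by (simp add: subspace_scale)
      then have "?u \<bullet> (M *v ?u) \<le> \<mu>" using xmax \<mu>_def by blast
      then show ?thesis
        using False
        by (simp add: matrix_vector_mult_scaleR dot_square_norm power2_eq_square field_simps)
    qed simp
  qed
  have "M *v x = \<mu> *\<^sub>R x"
    using maximiser_of_quadratic_form_is_eigenvector[OF sym V inv xV max] xx \<mu>_def by simp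
  with xV xx max that show ?thesis by blast
qed

lemma symmetric_orthogonal_complement_of_eigenvector:
  fixes M :: "real^'n^'n"
  assumes sym: "transpose M = M" and V: "subspace V" and inv: "\<forall>y\<in>V. M *v y \<in> V"
    and x: "x \<in> V" "x \<noteq> 0" and eig: "M *v x = \<mu> *\<^sub>R x"
  defines "W \<equiv> V \<inter> {y. x \<bullet> y = 0}"
  shows "subspace W" "\<forall>y\<in>W. M *v y \<in> W" "dim W = dim V - 1"
proof -
  show "subspace W" unfolding W_def using V subspace_hyperplane[of x] by (simp add: subspace_inter)
  show "\<forall>y\<in>W. M *v y \<in> W"
  proof
    fix y assume "y \<in> W"
    moreover have "x \<bullet> (M *v y) = \<mu> * (x \<bullet> y)"
      using inner_matrix_vector_symmetric[OF sym, of x y] eig by simp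
    ultimately show "M *v y \<in> W" unfolding W_def using inv by auto
  qed
  have "{y \<in> V. \<forall>w \<in> span {x}. orthogonal w y} = W"
    unfolding W_def orthogonal_def span_singleton by (auto simp: inner_scaleR_left)
  moreover have "dim {y \<in> V. \<forall>w \<in> span {x}. orthogonal w y} + dim (span {x}) = dim V"
    by (rule dim_subspace_orthogonal_to_vectors) (use V x in \<open>auto simp: span_minimal\<close>)
  ultimately show "dim W = dim V - 1" using x by (simp add: dim_span)
qed

lemma symmetric_invariant_subspace_sorted_eigenbasis:
  fixes M :: "real^'n^'n"
  assumes sym: "transpose M = M"
  shows "subspace V \<Longrightarrow> \<forall>y\<in>V. M *v y \<in> V \<Longrightarrow> dim V = d \<Longrightarrow>
    \<exists>lam v. (\<forall>i<d. v i \<in> V) \<and> orthonormal_eigenvectors M d lam v \<and>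
      (\<forall>i j. i \<le> j \<longrightarrow> j < d \<longrightarrow> lam j \<le> lam i)"
proof (induction d arbitrary: V)
  case 0
  then show ?case by (auto simp: orthonormal_eigenvectors_def)
next
  case (Suc d)
  have "V \<noteq> {0}" using Suc.prems(3) by auto
  then obtain x \<mu> where x: "x \<in> V" "x \<bullet> x = 1" "M *v x = \<mu> *\<^sub>R x"
    and max: "\<forall>y\<in>V. y \<bullet> (M *v y) \<le> \<mu> * (y \<bullet> y)"
    using symmetric_top_eigenvector[OF sym Suc.prems(1,2)] by blast
  define W where "W = V \<inter> {y. x \<bullet> y = 0}"
  have "x \<noteq> 0" using x(2) by auto
  then obtain lam' v' where v'W: "\<forall>i<d. v' i \<in> W" and v': "orthonormal_eigenvectors M d lam' v'"
    and sorted': "\<forall>i j. i \<le> j \<longrightarrow> j < d \<longrightarrow> lam' j \<le> lam' i"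
    using symmetric_orthogonal_complement_of_eigenvector[OF sym Suc.prems(1,2) x(1) _ x(3)]
      Suc.prems(3) Suc.IH unfolding W_def by (metis diff_Suc_1)
  have le_\<mu>: "lam' i \<le> \<mu>" if "i < d" for i
  proof -
    have "v' i \<in> V" "v' i \<bullet> v' i = 1"
      using v'W v' that unfolding W_def orthonormal_eigenvectors_def by auto
    then show ?thesis
      using max v' that unfolding orthonormal_eigenvectors_def by force
  qed
  define lam where "lam i = (if i = 0 then \<mu> else lam' (i - 1))" for i
  define v where "v i = (if i = 0 then x else v' (i - 1))" for i
  have "\<forall>i<Suc d. v i \<in> V" using v'W x(1) unfolding v_def W_def by auto
  moreover have "orthonormal_eigenvectors M (Suc d) lam v"
    unfolding orthonormal_eigenvectors_def
  proof (intro conjI allI impI)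
    fix i j assume "i < Suc d" "j < Suc d"
    then show "v i \<bullet> v j = (if i = j then 1 else 0)"
      using v' v'W x(2) unfolding v_def W_def orthonormal_eigenvectors_def
      by (cases "i = 0"; cases "j = 0") (auto simp: inner_commute)
  next
    fix i assume "i < Suc d"
    then show "M *v v i = lam i *\<^sub>R v i"
      using v' x(3) unfolding v_def lam_def orthonormal_eigenvectors_def by auto
  qed
  moreover have "\<forall>i j. i \<le> j \<longrightarrow> j < Suc d \<longrightarrow> lam j \<le> lam i"
  proof (intro allI impI)
    fix i j assume "i \<le> j" "j < Suc d"
    then show "lam j \<le> lam i"
      using sorted' le_\<mu> unfolding lam_def by (cases "i = 0"; cases "j = 0") auto
  qed
  ultimately show ?case by blast
qed

lemma sorted_eigs_eigenbasis:
  fixes M :: "real^'n^'n"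
  assumes sym: "transpose M = M"
  shows "(\<exists>v. orthonormal_eigenvectors M CARD('n) (sorted_eigs M) v) \<and>
    (\<forall>i j. i \<le> j \<longrightarrow> j < CARD('n) \<longrightarrow> sorted_eigs M j \<le> sorted_eigs M i)"
proof -
  obtain lam v where v: "orthonormal_eigenvectors M CARD('n) lam v"
    and sorted: "\<forall>i j. i \<le> j \<longrightarrow> j < CARD('n) \<longrightarrow> lam j \<le> lam i"
    using symmetric_invariant_subspace_sorted_eigenbasis[OF sym subspace_UNIV] by fastforce
  \<comment> \<open>\<open>sorted_eigs\<close> also demands the padding by zeros beyond the dimension\<close>
  define lam0 where "lam0 i = (if i < CARD('n) then lam i else 0)" for i
  have "orthonormal_eigenvectors M CARD('n) lam0 v"
    using v unfolding orthonormal_eigenvectors_def lam0_def by simp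
  with sorted have "\<exists>lam. (\<exists>v. orthonormal_eigenvectors M CARD('n) lam v) \<and>
      (\<forall>i j. i \<le> j \<longrightarrow> j < CARD('n) \<longrightarrow> lam j \<le> lam i) \<and> (\<forall>i \<ge> CARD('n). lam i = 0)"
    by (intro exI[of _ lam0]) (auto simp: lam0_def)
  then show ?thesis
    unfolding sorted_eigs_def orthonormal_eigenvectors_def by (rule someI2_ex) blast
qed

lemma det_eq_prod_eigenvalues:
  fixes M :: "real^'n^'n"
  assumes "orthonormal_eigenvectors M CARD('n) lam v"
  shows "det M = (\<Prod>i<CARD('n). lam i)"
proof -
  have eig: "\<forall>i<CARD('n). M *v v i = lam i *\<^sub>R v i"
    and orth: "\<forall>i<CARD('n). \<forall>j<CARD('n). v i \<bullet> v j = (if i = j then 1 else 0)"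
    using assms unfolding orthonormal_eigenvectors_def by auto
  obtain b :: "'n \<Rightarrow> nat" where b: "bij_betw b UNIV {..<CARD('n)}"
    using ex_bij_betw_finite_nat[of "UNIV :: 'n set"] atLeast0LessThan by auto
  then have b_less: "b l < CARD('n)" and b_eq: "b l = b l' \<longleftrightarrow> l = l'" for l l'
    by (auto simp: bij_betw_def inj_on_def)
  define Q :: "real^'n^'n" where "Q = (\<chi> i l. v (b l) $ i)"
  define D :: "real^'n^'n" where "D = (\<chi> i l. if i = l then lam (b i) else 0)"
  have "transpose Q ** Q = mat 1"
    using orth b_less b_eq
    by (simp add: vec_eq_iff mat_def Q_def matrix_matrix_mult_def transpose_def inner_vec_def)
  then have "det Q \<noteq> 0"
    using det_mul[of "transpose Q" Q] by (auto simp: det_transpose)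
  have "M ** Q = Q ** D"
  proof -
    have "(Q ** D) $ i $ l = lam (b l) * v (b l) $ i" for i l
      by (simp add: Q_def D_def matrix_matrix_mult_def if_distrib[of "\<lambda>x. _ * x"] cong: if_cong)
    moreover have "(M ** Q) $ i $ l = (M *v v (b l)) $ i" for i l
      by (simp add: Q_def matrix_matrix_mult_def matrix_vector_mult_def)
    ultimately show ?thesis using eig b_less by (simp add: vec_eq_iff)
  qed
  then have "det M * det Q = det Q * det D" by (metis det_mul)
  then have "det M = det D" using \<open>det Q \<noteq> 0\<close> by simp
  also have "det D = (\<Prod>l\<in>UNIV. lam (b l))" by (simp add: D_def det_diagonal)
  also have "\<dots> = (\<Prod>i<CARD('n). lam i)" by (rule prod.reindex_bij_betw[OF b])
  finally show ?thesis .
qed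

lemma pminor_scaleR: "pminor (c *\<^sub>R K) T = c ^ card T * pminor K T"
  unfolding pminor_def sum_distrib_left
  by (intro sum.cong refl) (simp add: prod.distrib prod_constant mult_ac)

lemma pminor_eq_sum_permutations_UNIV:
  fixes K :: "real^'n^'n"
  shows "pminor K T = (\<Sum>p\<in>{p. p permutes UNIV}.
            if p permutes T then of_int (sign p) * (\<Prod>i\<in>T. K $ i $ p i) else 0)"
  unfolding pminor_def
  by (rule sum.mono_neutral_cong_left) (auto simp: finite_permutations intro: permutes_subset)

lemma prod_fixpoint_indicator:
  assumes "p permutes (UNIV :: 'n::finite set)"
  shows "(\<Prod>i\<in>UNIV - T. if i = p i then 1 else 0 :: real) = (if p permutes T then 1 else 0)"
proof (cases "p permutes T")
  case True
  then show ?thesis by (auto simp: permutes_def intro: prod.neutral)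
next
  case False
  then obtain x where "x \<notin> T" "p x \<noteq> x" using assms unfolding permutes_def by blast
  then have "(\<Prod>i\<in>UNIV - T. if i = p i then 1 else 0 :: real) = 0"
    by (intro prod_zero) (auto intro!: bexI[of _ x])
  with False show ?thesis by simp
qed

definition principal_block :: "real^'n^'n \<Rightarrow> 'n set \<Rightarrow> real^'n^'n" where
  "principal_block K T = (\<chi> i l. if i \<in> T \<and> l \<in> T then K $ i $ l else if i = l then 1 else 0)"

lemma det_principal_block: "det (principal_block K T) = pminor K T"
proof -
  have "of_int (sign p) * (\<Prod>i\<in>UNIV. principal_block K T $ i $ p i) =
        (if p permutes T then of_int (sign p) * (\<Prod>i\<in>T. K $ i $ p i) else 0)"
    if p: "p permutes UNIV" for p
  proof -
    have "(\<Prod>i\<in>UNIV. principal_block K T $ i $ p i) =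
        (\<Prod>i\<in>T. principal_block K T $ i $ p i) * (\<Prod>i\<in>UNIV - T. if i = p i then 1 else 0)"
      by (subst prod.subset_diff[of T])
        (auto simp: principal_block_def mult.commute intro!: prod.cong)
    also have "\<dots> = (if p permutes T then \<Prod>i\<in>T. K $ i $ p i else 0)"
      using permutes_in_image[of p T]
      by (auto simp: prod_fixpoint_indicator[OF p] principal_block_def intro!: prod.cong)
    finally show ?thesis by simp
  qed
  then show ?thesis
    unfolding det_def pminor_eq_sum_permutations_UNIV by (intro sum.cong) auto
qed

lemma det_mat1_add_eq_sum_pminor:
  fixes K :: "real^'n^'n"
  shows "det (mat 1 + K) = (\<Sum>T\<in>UNIV. pminor K T)"
proof -
  have "(\<Prod>i\<in>UNIV. (mat 1 + K) $ i $ p i) = (\<Sum>T\<in>UNIV. if p permutes T then \<Prod>i\<in>T. K $ i $ p i else 0)"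
    if p: "p permutes UNIV" for p
  proof -
    have "(\<Prod>i\<in>UNIV. (mat 1 + K) $ i $ p i) = (\<Prod>i\<in>UNIV. K $ i $ p i + (if i = p i then 1 else 0))"
      by (simp add: mat_def add.commute)
    also have "\<dots> = (\<Sum>T\<in>Pow UNIV. (\<Prod>i\<in>T. K $ i $ p i) * (\<Prod>i\<in>UNIV - T. if i = p i then 1 else 0))"
      by (rule prod_add) simp
    finally show ?thesis by (auto simp: prod_fixpoint_indicator[OF p] intro!: sum.cong)
  qed
  then have "det (mat 1 + K) = (\<Sum>p\<in>{p. p permutes UNIV}. \<Sum>T\<in>UNIV.
       if p permutes T then of_int (sign p) * (\<Prod>i\<in>T. K $ i $ p i) else 0)"
    unfolding det_def
    by (intro sum.cong) (auto simp: sum_distrib_left if_distrib[of "\<lambda>x. _ * x"] cong: if_cong)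
  also have "\<dots> = (\<Sum>T\<in>UNIV. pminor K T)"
    unfolding pminor_eq_sum_permutations_UNIV by (rule sum.swap)
  finally show ?thesis .
qed

definition gram :: "('n \<Rightarrow> 'a::real_inner) \<Rightarrow> real^'n^'n" where
  "gram w = (\<chi> i l. w i \<bullet> w l)"

lemma gram_columns: "transpose A ** A = gram (\<lambda>l. column l A)"
  by (simp add: vec_eq_iff gram_def matrix_matrix_mult_def transpose_def column_def inner_vec_def)

lemma det_principal_block_gram_add_multiple:
  fixes w :: "'n::finite \<Rightarrow> 'a::real_inner"
  assumes "i \<in> U" "j \<in> U" "i \<noteq> j"
  shows "det (principal_block (gram (w(j := w j + c *\<^sub>R w i))) U) = det (principal_block (gram w) U)"
proof -
  define G where "G = principal_block (gram w) U"
  \<comment> \<open>\<open>H\<close> is \<open>G\<close> after the row operation; the target is \<open>H\<^sup>T\<close> after the same row operation\<close>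
  define H :: "real^'n^'n" where "H = (\<chi> a b. if a \<in> U \<and> b \<in> U then (w(j := w j + c *\<^sub>R w i)) a \<bullet> w b
      else if a = b then 1 else 0)"
  have "H = (\<chi> k. if k = j then row j G + c *s row i G else row k G)"
    using assms
    by (auto simp: vec_eq_iff row_def inner_add_left H_def G_def principal_block_def gram_def)
  then have "det H = det G" using det_row_operation[of j i G c] assms by simp
  moreover have "principal_block (gram (w(j := w j + c *\<^sub>R w i))) U =
      (\<chi> k. if k = j then row j (transpose H) + c *s row i (transpose H) else row k (transpose H))"
    using assms by (auto simp: vec_eq_iff row_def transpose_def inner_add_left inner_add_right
        inner_commute H_def principal_block_def gram_def)
  ultimately show ?thesis
    using det_row_operation[of j i "transpose H" c] assms by (simp add: det_transpose G_def)
qed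

lemma det_principal_block_gram_add_span:
  fixes w :: "'n::finite \<Rightarrow> 'a::real_inner"
  assumes j: "j \<in> U" and x: "x \<in> span (w ` (U - {j}))"
  shows "det (principal_block (gram (w(j := w j + x))) U) = det (principal_block (gram w) U)"
  using x
proof (induction rule: span_induct_alt)
  case (step c y x)
  then obtain i where i: "i \<in> U" "i \<noteq> j" "y = w i" by auto
  define w' where "w' = w(j := w j + x)"
  have "w(j := w j + (c *\<^sub>R y + x)) = w'(j := w' j + c *\<^sub>R w' i)"
    using i by (simp add: w'_def fun_eq_iff algebra_simps)
  then have "det (principal_block (gram (w(j := w j + (c *\<^sub>R y + x)))) U) =
      det (principal_block (gram w') U)"
    using det_principal_block_gram_add_multiple[OF i(1) j i(2)] by simp
  also have "\<dots> = det (principal_block (gram w) U)"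
    using step.IH by (simp add: w'_def fun_upd_def)
  finally show ?case .
qed simp

lemma pminor_gram_insert:
  fixes w :: "'n::finite \<Rightarrow> 'a::real_inner"
  assumes j: "j \<notin> T" and p: "p \<in> span (w ` T)" and orth: "\<forall>i\<in>T. (w j - p) \<bullet> w i = 0"
  shows "pminor (gram w) (insert j T) = ((w j - p) \<bullet> (w j - p)) * pminor (gram w) T"
proof -
  define r where "r = w j - p"
  define B where "B = principal_block (gram w) T"
  have "- p \<in> span (w ` (insert j T - {j}))" using p j by (simp add: span_neg)
  then have "pminor (gram w) (insert j T) = det (principal_block (gram (w(j := r))) (insert j T))"
    using det_principal_block_gram_add_span[of j "insert j T" "- p" w]
    by (simp add: r_def det_principal_block)
  also have "principal_block (gram (w(j := r))) (insert j T) =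
      (\<chi> k. if k = j then (r \<bullet> r) *s row k B else row k B)"
    using j orth
    by (auto simp: vec_eq_iff row_def principal_block_def gram_def r_def B_def inner_commute)
  also have "det \<dots> = (r \<bullet> r) * det (\<chi> k. if k = j then row k B else row k B)"
    by (rule det_row_mul)
  also have "(\<chi> k. if k = j then row k B else row k B) = B"
    by (simp add: row_def vec_lambda_eta)
  finally show ?thesis by (simp add: r_def B_def det_principal_block)
qed

lemma proj_onto_span:
  fixes x :: "'a::euclidean_space"
  shows "proj_onto (span S) x \<in> span S" "\<forall>v\<in>span S. (x - proj_onto (span S) x) \<bullet> v = 0"
proof -
  obtain y z where "y \<in> span S" "\<And>w. w \<in> span S \<Longrightarrow> orthogonal z w" "x = y + z"
    using orthogonal_subspace_decomp_exists by blast
  then have "\<exists>p. p \<in> span S \<and> (\<forall>v\<in>span S. (x - p) \<bullet> v = 0)"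
    by (intro exI[of _ y]) (auto simp: orthogonal_def)
  then have "proj_onto (span S) x \<in> span S \<and> (\<forall>v\<in>span S. (x - proj_onto (span S) x) \<bullet> v = 0)"
    unfolding proj_onto_def by (rule someI_ex)
  then show "proj_onto (span S) x \<in> span S" "\<forall>v\<in>span S. (x - proj_onto (span S) x) \<bullet> v = 0"
    by auto
qed

lemma pminor_mult_Er:
  fixes A :: "real^'n^'m"
  shows "pminor (transpose A ** A) T * Er A T =
    (\<Sum>j\<in>UNIV - T. pminor (transpose A ** A) (insert j T))"
proof -
  define V where "V = span ((\<lambda>l. column l A) ` T)"
  define r where "r j = column j A - proj_onto V (column j A)" for j
  have "Er A T = (\<Sum>j\<in>UNIV. \<Sum>i\<in>UNIV. (r j $ i)\<^sup>2)"
    unfolding Er_def frob2_def projS_def r_def V_def by (subst sum.swap) (simp add: column_def)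
  also have "\<dots> = (\<Sum>j\<in>UNIV - T. r j \<bullet> r j)"
  proof (rule sum.mono_neutral_cong_right)
    show "\<forall>j\<in>UNIV - (UNIV - T). (\<Sum>i\<in>UNIV. (r j $ i)\<^sup>2) = 0"
    proof
      fix j assume "j \<in> UNIV - (UNIV - T)"
      then have "column j A \<in> V" unfolding V_def by (auto intro: span_base)
      then have "r j \<in> V" unfolding r_def V_def by (intro span_diff proj_onto_span)
      then have "r j \<bullet> r j = 0" using proj_onto_span(2) unfolding r_def V_def by blast
      then show "(\<Sum>i\<in>UNIV. (r j $ i)\<^sup>2) = 0" by (simp add: inner_vec_def power2_eq_square)
    qed
  qed (simp_all add: inner_vec_def power2_eq_square)
  finally have "pminor (transpose A ** A) T * Er A T =
      (\<Sum>j\<in>UNIV - T. (r j \<bullet> r j) * pminor (gram (\<lambda>l. column l A)) T)"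
    by (simp add: sum_distrib_left gram_columns mult.commute)
  also have "\<dots> = (\<Sum>j\<in>UNIV - T. pminor (transpose A ** A) (insert j T))"
    unfolding gram_columns r_def V_def
    by (intro sum.cong refl pminor_gram_insert[symmetric] proj_onto_span)
      (auto intro: proj_onto_span(2)[rule_format] span_base)
  finally show ?thesis .
qed

lemma sum_insert_eq_sum_card:
  fixes F :: "nat \<Rightarrow> 'n::finite set \<Rightarrow> real"
  shows "(\<Sum>T\<in>UNIV. \<Sum>j\<in>UNIV - T. F (card T) (insert j T)) =
         (\<Sum>U\<in>UNIV. real (card U) * F (card U - 1) U)"
proof -
  have "(\<Sum>T\<in>UNIV. \<Sum>j\<in>UNIV - T. F (card T) (insert j T)) =
        (\<Sum>(T, j)\<in>Sigma UNIV (\<lambda>T. UNIV - T). F (card T) (insert j T))"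
    by (rule sum.Sigma) auto
  also have "\<dots> = (\<Sum>(U, j)\<in>Sigma UNIV (\<lambda>U. U). F (card U - 1) U)"
    by (rule sum.reindex_bij_witness[of _ "\<lambda>(U, j). (U - {j}, j)" "\<lambda>(T, j). (insert j T, j)"])
       (auto simp: insert_absorb)
  also have "\<dots> = (\<Sum>U\<in>UNIV. \<Sum>j\<in>U. F (card U - 1) U)"
    by (rule sum.Sigma[symmetric]) auto
  finally show ?thesis by simp
qed

lemma dpp_expect_Er_gram:
  fixes A :: "real^'n^'m"
  shows "c * dpp_expect (c *\<^sub>R (transpose A ** A)) (Er A) =
         dpp_expect (c *\<^sub>R (transpose A ** A)) (\<lambda>S. real (card S))"
proof -
  let ?M = "transpose A ** A"
  have "c * (\<Sum>T\<in>UNIV. pminor (c *\<^sub>R ?M) T * Er A T) =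
        (\<Sum>T\<in>UNIV. \<Sum>j\<in>UNIV - T. c ^ Suc (card T) * pminor ?M (insert j T))"
    by (simp add: sum_distrib_left pminor_scaleR pminor_mult_Er mult.assoc)
  also have "\<dots> = (\<Sum>U\<in>UNIV. real (card U) * (c ^ Suc (card U - 1) * pminor ?M U))"
    by (rule sum_insert_eq_sum_card)
  also have "\<dots> = (\<Sum>U\<in>UNIV. real (card U) * pminor (c *\<^sub>R ?M) U)"
  proof (intro sum.cong refl)
    fix U :: "'n set"
    show "real (card U) * (c ^ Suc (card U - 1) * pminor ?M U) = real (card U) * pminor (c *\<^sub>R ?M) U"
      by (cases "card U") (simp_all add: pminor_scaleR)
  qed
  finally show ?thesis
    unfolding dpp_expect_def dpp_prob_def
    by (simp add: sum_distrib_left sum_divide_distrib[symmetric] mult.commute)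
qed

lemma orthonormal_eigenvectors_scaleR:
  assumes "orthonormal_eigenvectors K d mu v"
  shows "orthonormal_eigenvectors (t *\<^sub>R K) d (\<lambda>i. t * mu i) v"
  using assms by (simp add: orthonormal_eigenvectors_def scaleR_matrix_vector_assoc[symmetric])

lemma orthonormal_eigenvectors_mat1_add:
  assumes "orthonormal_eigenvectors K d mu v"
  shows "orthonormal_eigenvectors (mat 1 + K) d (\<lambda>i. 1 + mu i) v"
  using assms
  by (simp add: orthonormal_eigenvectors_def matrix_vector_mult_add_rdistrib scaleR_add_left)

lemma dpp_expect_card:
  fixes K :: "real^'n^'n"
  assumes eig: "orthonormal_eigenvectors K CARD('n) mu v" and nz: "\<forall>i<CARD('n). 1 + mu i \<noteq> 0"
  shows "dpp_expect K (\<lambda>S. real (card S)) = (\<Sum>i<CARD('n). mu i / (1 + mu i))"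
proof -
  \<comment> \<open>two expansions of the polynomial \<open>det (I + t K)\<close>, differentiated at \<open>t = 1\<close>\<close>
  define F where "F t = (\<Sum>U\<in>UNIV. t ^ card U * pminor K U)" for t :: real
  have F_prod: "F t = (\<Prod>i<CARD('n). 1 + t * mu i)" for t
  proof -
    have "F t = det (mat 1 + t *\<^sub>R K)"
      by (simp add: F_def det_mat1_add_eq_sum_pminor pminor_scaleR)
    also have "\<dots> = (\<Prod>i<CARD('n). 1 + t * mu i)"
      using orthonormal_eigenvectors_mat1_add[OF orthonormal_eigenvectors_scaleR[OF eig]]
      by (rule det_eq_prod_eigenvalues)
    finally show ?thesis .
  qed
  have "(F has_field_derivative (\<Sum>U\<in>UNIV. real (card U) * pminor K U)) (at 1)"
    unfolding F_def by (auto intro!: derivative_eq_intros)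
  moreover have "(F has_field_derivative F 1 * (\<Sum>i<CARD('n). mu i / (1 + mu i))) (at 1)"
  proof -
    have "((\<lambda>t. 1 + t * mu i) has_field_derivative mu i) (at 1)" for i
      by (auto intro!: derivative_eq_intros)
    then show ?thesis
      using has_field_derivative_prod'[of "{..<CARD('n)}" "\<lambda>i t. 1 + t * mu i" 1 mu] nz
      unfolding F_prod[abs_def] by simp
  qed
  ultimately have "(\<Sum>U\<in>UNIV. real (card U) * pminor K U) = F 1 * (\<Sum>i<CARD('n). mu i / (1 + mu i))"
    by (rule DERIV_unique)
  moreover have "F 1 = det (mat 1 + K)"
    by (simp add: F_def det_mat1_add_eq_sum_pminor)
  moreover have "F 1 \<noteq> 0" using nz by (simp add: F_prod)
  ultimately show ?thesis
    unfolding dpp_expect_def dpp_prob_def by (simp add: sum_divide_distrib[symmetric] mult.commute)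
qed

lemma gram_matrix_symmetric:
  fixes A :: "real^'n^'m"
  shows "transpose (transpose A ** A) = transpose A ** A"
  by (simp add: matrix_transpose_mul)

lemma eigsAtA_eigenvectors:
  fixes A :: "real^'n^'m"
  obtains v where "orthonormal_eigenvectors (transpose A ** A) CARD('n) (eigsAtA A) v"
  using sorted_eigs_eigenbasis[OF gram_matrix_symmetric] unfolding eigsAtA_def by blast

lemma eigsAtA_sorted:
  fixes A :: "real^'n^'m"
  assumes "i \<le> j" "j < CARD('n)"
  shows "eigsAtA A j \<le> eigsAtA A i"
  using sorted_eigs_eigenbasis[OF gram_matrix_symmetric] assms unfolding eigsAtA_def by blast

lemma eigsAtA_nonneg:
  fixes A :: "real^'n^'m"
  assumes i: "i < CARD('n)"
  shows "0 \<le> eigsAtA A i"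
proof -
  obtain v where v: "orthonormal_eigenvectors (transpose A ** A) CARD('n) (eigsAtA A) v"
    by (rule eigsAtA_eigenvectors)
  have "eigsAtA A i = v i \<bullet> (transpose A *v (A *v v i))"
    using v i by (simp add: orthonormal_eigenvectors_def matrix_vector_mul_assoc)
  also have "\<dots> = (A *v v i) \<bullet> (A *v v i)"
    by (simp add: vector_transpose_matrix dot_lmul_matrix[symmetric] inner_commute)
  finally show ?thesis by simp
qed

lemma dpp_expect_card_gram:
  fixes A :: "real^'n^'m"
  assumes "\<alpha> > 0"
  shows "dpp_expect ((1 / \<alpha>) *\<^sub>R (transpose A ** A)) (\<lambda>S. real (card S)) =
    (\<Sum>i<CARD('n). eigsAtA A i / (eigsAtA A i + \<alpha>))"
proof -
  obtain v where v: "orthonormal_eigenvectors (transpose A ** A) CARD('n) (eigsAtA A) v"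
    by (rule eigsAtA_eigenvectors)
  have nz: "1 + 1 / \<alpha> * eigsAtA A i \<noteq> 0"
    and ratio: "1 / \<alpha> * eigsAtA A i / (1 + 1 / \<alpha> * eigsAtA A i) = eigsAtA A i / (eigsAtA A i + \<alpha>)"
    if "i < CARD('n)" for i
  proof -
    have "eigsAtA A i + \<alpha> > 0" using eigsAtA_nonneg[OF that, where A = A] assms by simp
    moreover have "1 + 1 / \<alpha> * eigsAtA A i = (eigsAtA A i + \<alpha>) / \<alpha>"
      using assms by (simp add: field_simps)
    ultimately show "1 + 1 / \<alpha> * eigsAtA A i \<noteq> 0"
      "1 / \<alpha> * eigsAtA A i / (1 + 1 / \<alpha> * eigsAtA A i) = eigsAtA A i / (eigsAtA A i + \<alpha>)"
      using assms by simp_all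
  qed
  have "dpp_expect ((1 / \<alpha>) *\<^sub>R (transpose A ** A)) (\<lambda>S. real (card S)) =
      (\<Sum>i<CARD('n). 1 / \<alpha> * eigsAtA A i / (1 + 1 / \<alpha> * eigsAtA A i))"
    by (rule dpp_expect_card[OF orthonormal_eigenvectors_scaleR[OF v, of "1 / \<alpha>"]])
      (use nz in blast)
  also have "\<dots> = (\<Sum>i<CARD('n). eigsAtA A i / (eigsAtA A i + \<alpha>))"
    using ratio by (intro sum.cong) auto
  finally show ?thesis .
qed

lemma sqrt_one_plus_two_mult_bound:
  fixes x :: real
  assumes "0 \<le> x"
  shows "x \<le> (sqrt (1 + 2 * x) - 1) * sqrt (1 + 2 * x)"
proof -
  have "sqrt (1 + 2 * x) \<le> sqrt ((1 + x)\<^sup>2)"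
    by (rule real_sqrt_le_mono) (simp add: power2_eq_square algebra_simps)
  then have "sqrt (1 + 2 * x) \<le> 1 + x" using assms by simp
  moreover have "(sqrt (1 + 2 * x))\<^sup>2 = 1 + 2 * x" using assms by simp
  ultimately show ?thesis by (simp add: power2_eq_square algebra_simps)
qed

lemma ratio_le_one_minus_inverse:
  fixes L \<alpha> \<gamma> :: real
  assumes "0 \<le> L" "0 < \<alpha>" "1 \<le> \<gamma>" "L \<le> (\<gamma> - 1) * \<alpha>"
  shows "L / (L + \<alpha>) \<le> 1 - 1 / \<gamma>"
proof -
  have "L * \<gamma> \<le> (\<gamma> - 1) * (L + \<alpha>)" using assms by (simp add: algebra_simps)
  then show ?thesis using assms by (simp add: field_simps)
qed

lemma tail_sum_lower_bound:
  fixes lam :: "nat \<Rightarrow> real"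
  assumes sorted: "\<forall>i j. i \<le> j \<longrightarrow> j < n \<longrightarrow> lam j \<le> lam i" and "s \<le> k" "k \<le> n"
  shows "(\<Sum>i\<in>{s..<n}. lam i) - (real k - real s) * lam s \<le> (\<Sum>i\<in>{k..<n}. lam i)"
proof -
  have "(\<Sum>i\<in>{s..<k}. lam i) \<le> (\<Sum>i\<in>{s..<k}. lam s)"
    using sorted assms(3) by (intro sum_mono) auto
  moreover have "(\<Sum>i\<in>{s..<n}. lam i) = (\<Sum>i\<in>{s..<k}. lam i) + (\<Sum>i\<in>{k..<n}. lam i)"
    using assms(2,3) by (simp add: sum.atLeastLessThan_concat)
  ultimately show ?thesis using assms(2) by (simp add: of_nat_diff)
qed

lemma sum_ratio_le_split:
  fixes lam :: "nat \<Rightarrow> real"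
  assumes nonneg: "\<forall>i<n. 0 \<le> lam i" and sorted: "\<forall>i j. i \<le> j \<longrightarrow> j < n \<longrightarrow> lam j \<le> lam i"
    and sk: "s \<le> k" and kn: "k \<le> n" and \<alpha>: "0 < \<alpha>"
  shows "(\<Sum>i<n. lam i / (lam i + \<alpha>)) \<le>
    real s + (real k - real s) * (lam s / (lam s + \<alpha>)) + (\<Sum>i\<in>{k..<n}. lam i) / \<alpha>"
proof -
  have "(\<Sum>i<n. lam i / (lam i + \<alpha>)) = (\<Sum>i\<in>{0..<s}. lam i / (lam i + \<alpha>)) +
      (\<Sum>i\<in>{s..<k}. lam i / (lam i + \<alpha>)) + (\<Sum>i\<in>{k..<n}. lam i / (lam i + \<alpha>))"
    using sk kn by (simp add: atLeast0LessThan[symmetric] sum.atLeastLessThan_concat)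
  also have "(\<Sum>i\<in>{0..<s}. lam i / (lam i + \<alpha>)) \<le> (\<Sum>i\<in>{0..<s}. 1)"
  proof (intro sum_mono)
    fix i assume "i \<in> {0..<s}"
    then have "0 \<le> lam i" using nonneg sk kn by auto
    then show "lam i / (lam i + \<alpha>) \<le> 1" using \<alpha> by simp
  qed
  also have "(\<Sum>i\<in>{s..<k}. lam i / (lam i + \<alpha>)) \<le> (\<Sum>i\<in>{s..<k}. lam s / (lam s + \<alpha>))"
  proof (intro sum_mono)
    fix i assume "i \<in> {s..<k}"
    then have "0 \<le> lam i" "lam i \<le> lam s" using nonneg sorted kn by auto
    then show "lam i / (lam i + \<alpha>) \<le> lam s / (lam s + \<alpha>)"
      using \<alpha> by (simp add: field_simps mult_right_mono)
  qed
  also have "(\<Sum>i\<in>{k..<n}. lam i / (lam i + \<alpha>)) \<le> (\<Sum>i\<in>{k..<n}. lam i / \<alpha>)"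
    using nonneg \<alpha> by (intro sum_mono divide_left_mono) auto
  finally show ?thesis
    using sk by (simp add: of_nat_diff sum_divide_distrib)
qed

lemma stable_rank_tail_bound:
  fixes lam :: "nat \<Rightarrow> real" and n s k :: nat
  defines "t \<equiv> real s + (\<Sum>i\<in>{s..<n}. lam i) / lam s"
  assumes nonneg: "\<forall>i<n. 0 \<le> lam i" and sorted: "\<forall>i j. i \<le> j \<longrightarrow> j < n \<longrightarrow> lam j \<le> lam i"
    and sk: "s < k" and kt: "real k < t"
  shows "0 < lam s" "k \<le> n" "(t - real k) * lam s \<le> (\<Sum>i\<in>{k..<n}. lam i)"
proof -
  \<comment> \<open>if \<open>s \<ge> n\<close> or \<open>lam s = 0\<close> then \<open>t = s\<close> (recall \<open>x / 0 = 0\<close>), contradicting \<open>s < k < t\<close>\<close>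
  have "s < n" using kt sk unfolding t_def by (cases "s < n") auto
  moreover have "lam s \<noteq> 0" using kt sk unfolding t_def by auto
  ultimately show L: "0 < lam s" using nonneg by (simp add: order_less_le)
  show kn: "k \<le> n"
  proof (rule ccontr)
    assume "\<not> k \<le> n"
    have "(\<Sum>i\<in>{s..<n}. lam i) \<le> (real n - real s) * lam s"
      using tail_sum_lower_bound[OF sorted, of s n] \<open>s < n\<close> by simp
    also have "\<dots> \<le> (real k - real s) * lam s"
      using \<open>\<not> k \<le> n\<close> L by (intro mult_right_mono) auto
    finally show False using kt L unfolding t_def by (simp add: field_simps)
  qed
  have "t * lam s = real s * lam s + (\<Sum>i\<in>{s..<n}. lam i)"
    using L unfolding t_def by (simp add: field_simps)
  then show "(t - real k) * lam s \<le> (\<Sum>i\<in>{k..<n}. lam i)"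
    using tail_sum_lower_bound[OF sorted, of s k] sk kn by (simp add: algebra_simps)
qed

lemma sum_ratio_stable_rank_bound:
  fixes lam :: "nat \<Rightarrow> real" and \<epsilon> :: real and n s k :: nat
  defines "t \<equiv> real s + (\<Sum>i\<in>{s..<n}. lam i) / lam s"
  defines "\<gamma> \<equiv> sqrt (1 + 2 * (real k - real s) / (t - real k))"
  defines "\<alpha> \<equiv> \<gamma> * (\<Sum>i\<in>{k..<n}. lam i) / ((1 - \<epsilon>) * (real k - real s))"
  assumes nonneg: "\<forall>i<n. 0 \<le> lam i" and sorted: "\<forall>i j. i \<le> j \<longrightarrow> j < n \<longrightarrow> lam j \<le> lam i"
    and \<epsilon>: "0 \<le> \<epsilon>" "\<epsilon> < 1" and sk: "s < k" and kt: "real k < t"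
  shows "0 < (\<Sum>i\<in>{k..<n}. lam i)" "0 < \<alpha>"
    "(\<Sum>i<n. lam i / (lam i + \<alpha>)) \<le> real k - \<epsilon> * (real k - real s) / \<gamma>"
proof -
  define L where "L = lam s"
  define tail where "tail = (\<Sum>i\<in>{k..<n}. lam i)"
  have L: "0 < L" and kn: "k \<le> n" and tail_ge: "(t - real k) * L \<le> tail"
    using stable_rank_tail_bound[OF nonneg sorted sk kt[unfolded t_def]]
    unfolding L_def tail_def t_def by auto
  define x where "x = (real k - real s) / (t - real k)"
  have x: "0 < x" using sk kt unfolding x_def by simp
  have \<gamma>_eq: "\<gamma> = sqrt (1 + 2 * x)" unfolding \<gamma>_def x_def by simp
  have \<gamma>: "1 \<le> \<gamma>" using x unfolding \<gamma>_eq by simp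
  have tail: "0 < tail" using tail_ge kt L by (smt (verit) mult_pos_pos)
  then show "0 < (\<Sum>i\<in>{k..<n}. lam i)" unfolding tail_def .
  have d: "0 < (1 - \<epsilon>) * (real k - real s)" using \<epsilon> sk by simp
  have \<alpha>_eq: "\<alpha> = \<gamma> * tail / ((1 - \<epsilon>) * (real k - real s))" unfolding \<alpha>_def tail_def ..
  show \<alpha>: "0 < \<alpha>" unfolding \<alpha>_eq using \<gamma> tail d by simp
  \<comment> \<open>\<open>L \<le> (\<gamma> - 1) \<alpha>\<close>: this is what the choice of \<open>\<gamma>\<close> is made for\<close>
  have "L = x * ((t - real k) * L) / (real k - real s)" using sk kt unfolding x_def by simp
  also have "\<dots> \<le> (\<gamma> - 1) * \<gamma> * tail / (real k - real s)"
    using sqrt_one_plus_two_mult_bound[of x] x tail_ge kt L sk unfolding \<gamma>_eq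
    by (intro divide_right_mono mult_mono) auto
  also have "\<dots> \<le> (\<gamma> - 1) * \<gamma> * tail / ((1 - \<epsilon>) * (real k - real s))"
  proof (rule divide_left_mono)
    show "(1 - \<epsilon>) * (real k - real s) \<le> real k - real s"
      using \<epsilon> sk by (intro mult_left_le_one_le) auto
  qed (use \<gamma> tail d sk in auto)
  also have "\<dots> = (\<gamma> - 1) * \<alpha>"
    unfolding \<alpha>_eq by simp
  finally have "(real k - real s) * (L / (L + \<alpha>)) \<le> (real k - real s) * (1 - 1 / \<gamma>)"
    using L \<alpha> \<gamma> sk by (intro mult_left_mono ratio_le_one_minus_inverse) auto
  moreover have "tail / \<alpha> = (1 - \<epsilon>) * (real k - real s) / \<gamma>"
    unfolding \<alpha>_eq using tail \<gamma> d by simp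
  moreover have "real s + (real k - real s) * (1 - 1 / \<gamma>) + (1 - \<epsilon>) * (real k - real s) / \<gamma> =
      real k - \<epsilon> * (real k - real s) / \<gamma>"
    using \<gamma> by (simp add: field_simps)
  ultimately show "(\<Sum>i<n. lam i / (lam i + \<alpha>)) \<le> real k - \<epsilon> * (real k - real s) / \<gamma>"
    using sum_ratio_le_split[OF nonneg sorted less_imp_le[OF sk] kn \<alpha>] unfolding L_def tail_def
    by linarith
qed

theorem lemma1:
  fixes A :: "real^'n^'m" and \<epsilon> :: real and s k :: nat
  assumes "0 \<le> \<epsilon>" and "\<epsilon> < 1"
    and "s < rank A"
    and "s < k" and "real k < real s + stable_rank A s"
  shows "let t = real s + stable_rank A s;
             \<gamma> = sqrt (1 + 2 * (real k - real s) / (t - real k));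
             \<Phi> = (1 + real s / (real k - real s)) * \<gamma>;
             \<alpha> = \<gamma> * OPT A k / ((1 - \<epsilon>) * (real k - real s));
             K = (1 / \<alpha>) *\<^sub>R (transpose A ** A)
         in dpp_expect K (Er A) / OPT A k \<le> \<Phi> / (1 - \<epsilon>) \<and>
            dpp_expect K (\<lambda>S. real (card S)) \<le> real k - \<epsilon> * (real k - real s) / \<gamma>"
proof -
  define \<gamma> where "\<gamma> = sqrt (1 + 2 * (real k - real s) / (real s + stable_rank A s - real k))"
  define \<alpha> where "\<alpha> = \<gamma> * OPT A k / ((1 - \<epsilon>) * (real k - real s))"
  define K where "K = (1 / \<alpha>) *\<^sub>R (transpose A ** A)"
  have "\<forall>i<CARD('n). 0 \<le> eigsAtA A i"
    and "\<forall>i j. i \<le> j \<longrightarrow> j < CARD('n) \<longrightarrow> eigsAtA A j \<le> eigsAtA A i"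
    by (auto intro: eigsAtA_nonneg eigsAtA_sorted)
  from sum_ratio_stable_rank_bound[OF this assms(1,2,4) assms(5)[unfolded stable_rank_def OPT_def]]
  have OPT: "0 < OPT A k" and \<alpha>: "0 < \<alpha>"
    and "(\<Sum>i<CARD('n). eigsAtA A i / (eigsAtA A i + \<alpha>)) \<le> real k - \<epsilon> * (real k - real s) / \<gamma>"
    unfolding \<alpha>_def \<gamma>_def stable_rank_def OPT_def by auto
  then have size: "dpp_expect K (\<lambda>S. real (card S)) \<le> real k - \<epsilon> * (real k - real s) / \<gamma>"
    unfolding K_def dpp_expect_card_gram[OF \<alpha>] by blast
  have E_Er: "dpp_expect K (Er A) = \<alpha> * dpp_expect K (\<lambda>S. real (card S))"
    using dpp_expect_Er_gram[of "1 / \<alpha>" A] \<alpha> unfolding K_def by (simp add: field_simps)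
  have "0 \<le> \<epsilon> * (real k - real s) / \<gamma>"
    using assms unfolding \<gamma>_def by (simp add: add_nonneg_nonneg)
  with size have "dpp_expect K (Er A) / OPT A k \<le> \<alpha> * real k / OPT A k"
    unfolding E_Er using \<alpha> OPT by (intro divide_right_mono mult_left_mono) auto
  also have "\<dots> = (1 + real s / (real k - real s)) * \<gamma> / (1 - \<epsilon>)"
  proof -
    have "1 + real s / (real k - real s) = real k / (real k - real s)"
      using assms by (simp add: field_simps)
    then show ?thesis
      using OPT assms unfolding \<alpha>_def by (simp add: mult.commute)
  qed
  finally show ?thesis
    using size unfolding Let_def \<gamma>_def[symmetric] \<alpha>_def[symmetric] K_def[symmetric] by (rule conjI)
qed

end
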